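(* Let $M\ge1$, $R\in(-1,1)^{M+1}$, $T_n=\sqrt{1-R_n^2}$, $k\in\mathfrak{L}_M$, and $u=\min\{\mathbb{1},\tilde k\}$. Then the (finite) sum of weights of scattering sequences with transit count vector $k$ is $$\mathfrak{a}(R,k):=\sum_{\mathsf{p}\in\mathsf{S}_M:\ \kappa(\mathsf{p})=k}w(\mathsf{p})=\sum_{b\in V(k)}\binom{k}{b}\binom{\tilde k-u}{b-u}(-R)^{\tilde k-b}R^{k-b}T^{2b},$$ where $V(k)=\{b\in\mathbb{Z}^{M+1}:u\le b\le\min\{k,\tilde k\}\}$. In particular $\mathfrak{a}(R,k)=a(R,k)$, the $k$-amplitude polynomial evaluated at $R$.
   Context: Scattering sequences: $\mathsf{S}_M$ is the set of integer sequences $\mathsf{p}=(i_0,\ldots,i_L)$ with $L\ge2$, $i_0=i_L=-1$, $i_j\in\{0,\ldots,M\}$ for $1\le j\le L-1$, and $|i_{j+1}-i_j|=1$ for all $j$. $\kappa(\mathsf{p})=(k_0,\ldots,k_M)$: $k_n$ is the number of maximal blocks of consecutive indices $j\in\{0,\ldots,L\}$ with $i_j\ge n$. Weight: for $1\le j\le L-1$ with $i_j=m$, $w_j=R_m$ if $i_{j-1}=i_{j+1}=m-1$; $w_j=-R_m$ if $i_{j-1}=i_{j+1}=m+1$; $w_j=\sqrt{1-R_m^2}$ otherwise; $w(\mathsf{p})=\prod_{j=1}^{L-1}w_j$. $\mathfrak{L}_M\subset\mathbb{Z}^{M+1}_{\geq0}$: all $k$ with $k_0=1$ and $k_n>0\Rightarrow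 k_{n-1}>0$ ($1\le n\le M$). $\tilde k=(k_1,\ldots,k_M,0)$; $\mathbb{1}=(1,\ldots,1)$; inequalities and $\min$ entrywise; $S^d=\prod_n S_n^{d_n}$; $\binom{k}{b}=\prod_n\binom{k_n}{b_n}$. The amplitude polynomial is $a(x,k)=\sum_{b\in V(k)}\binom{k}{b}\binom{\tilde k-u}{b-u}(-x)^{\tilde k-b}x^{k-b}\prod_n(1-x_n^2)^{b_n}$. *)

theory Defs
  imports Complex_Main
begin

text \<open>Integer vectors in Z^{M+1} are represented as functions nat => _ ; only the
  indices 0..M are meaningful (vectors in L_M are required to vanish beyond M).\<close>

definition scat_seqs :: "nat \<Rightarrow> int list set" where
  "scat_seqs M = {p. length p \<ge> 3 \<and> p ! 0 = -1 \<and> p ! (length p - 1) = -1 \<and>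
     (\<forall>j. 1 \<le> j \<and> j \<le> length p - 2 \<longrightarrow> 0 \<le> p ! j \<and> p ! j \<le> int M) \<and>
     (\<forall>j < length p - 1. \<bar>p ! (Suc j) - p ! j\<bar> = 1)}"

text \<open>kappa p n = number of maximal blocks of consecutive indices j with i_j >= n,
  counted via the first index of each block.\<close>
definition kappa :: "int list \<Rightarrow> nat \<Rightarrow> nat" where
  "kappa p n = card {j. j < length p \<and> p ! j \<ge> int n \<and> (j = 0 \<or> p ! (j - 1) < int n)}"

definition step_weight :: "(nat \<Rightarrow> real) \<Rightarrow> int list \<Rightarrow> nat \<Rightarrow> real" where
  "step_weight R p j =
     (let m = p ! j in
      if p ! (j - 1) = m - 1 \<and> p ! (Suc j) = m - 1 then R (nat m)
      else if p ! (j - 1) = m + 1 \<and> p ! (Suc j) = m + 1 then - R (nat m)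
      else sqrt (1 - (R (nat m))\<^sup>2))"

definition weight :: "(nat \<Rightarrow> real) \<Rightarrow> int list \<Rightarrow> real" where
  "weight R p = (\<Prod>j\<in>{1..<length p - 1}. step_weight R p j)"

definition Lset :: "nat \<Rightarrow> (nat \<Rightarrow> nat) set" where
  "Lset M = {k. k 0 = 1 \<and> (\<forall>n. 1 \<le> n \<and> n \<le> M \<longrightarrow> k n > 0 \<longrightarrow> k (n - 1) > 0) \<and>
                (\<forall>n > M. k n = 0)}"

definition ktil :: "nat \<Rightarrow> (nat \<Rightarrow> nat) \<Rightarrow> nat \<Rightarrow> nat" where
  "ktil M k n = (if n < M then k (Suc n) else 0)"

definition uvec :: "nat \<Rightarrow> (nat \<Rightarrow> nat) \<Rightarrow> nat \<Rightarrow> nat" where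
  "uvec M k n = min 1 (ktil M k n)"

definition Vset :: "nat \<Rightarrow> (nat \<Rightarrow> nat) \<Rightarrow> (nat \<Rightarrow> nat) set" where
  "Vset M k = {b. (\<forall>n \<le> M. uvec M k n \<le> b n \<and> b n \<le> min (k n) (ktil M k n)) \<and>
                  (\<forall>n > M. b n = 0)}"

definition amp_poly :: "nat \<Rightarrow> (nat \<Rightarrow> real) \<Rightarrow> (nat \<Rightarrow> nat) \<Rightarrow> real" where
  "amp_poly M x k = (\<Sum>b\<in>Vset M k.
     (\<Prod>n\<le>M. real (k n choose b n)) *
     (\<Prod>n\<le>M. real ((ktil M k n - uvec M k n) choose (b n - uvec M k n))) *
     (\<Prod>n\<le>M. (- x n) ^ (ktil M k n - b n)) *
     (\<Prod>n\<le>M. x n ^ (k n - b n)) *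
     (\<Prod>n\<le>M. (1 - (x n)\<^sup>2) ^ b n))"

end

theory Submission
  imports Defs "HOL-Library.FuncSet"
begin

text \<open>Scattering sequences are exactly the depth-first contours of plane trees of height at most
  \<open>M\<close>, framed by \<open>-1\<close> at both ends. Under this correspondence \<open>\<kappa>\<^sub>n\<close> is the number of nodes
  at depth \<open>n\<close>, and the weight factors over the nodes: a leaf at depth \<open>n\<close> contributes \<open>R\<^sub>n\<close>,
  a node with \<open>r > 0\<close> children contributes \<open>T\<^sub>n\<^sup>2 (-R\<^sub>n)\<^bsup>r-1\<^esup>\<close> (transmission in and out,
  one reflection from above between consecutive children). Peeling off one level of a forest at
  a time, the sum over trees with level sizes \<open>k\<close> becomes a product over \<open>n\<close> of the
  \<open>k\<^sub>n\<^sub>+\<^sub>1\<close>-th coefficient of the \<open>k\<^sub>n\<close>-th power of \<open>R\<^sub>n + T\<^sub>n\<^sup>2 x / (1 + R\<^sub>n x)\<close>. Choosing which \<open>b\<close>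
  of the \<open>k\<^sub>n\<close> nodes have children and composing \<open>k\<^sub>n\<^sub>+\<^sub>1\<close> into \<open>b\<close> positive parts turns this
  coefficient into the binomial sum of the amplitude polynomial.\<close>

section \<open>Scattering sequences as contours of plane trees\<close>

datatype tree = Node "tree list"

fun children :: "tree \<Rightarrow> tree list" where
  "children (Node ts) = ts"

fun contour :: "nat \<Rightarrow> tree \<Rightarrow> int list" where
  "contour m (Node ts) = int m # concat (map (\<lambda>s. contour (Suc m) s @ [int m]) ts)"

abbreviation unit_step :: "int \<Rightarrow> int \<Rightarrow> bool" where
  "unit_step a b \<equiv> \<bar>b - a\<bar> = 1"

lemma contour_ne [simp]: "contour m t \<noteq> []"
  by (cases t) simp

lemma hd_contour [simp]: "hd (contour m t) = int m"
  by (cases t) simp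

lemma last_concat_map_snoc: "ts \<noteq> [] \<Longrightarrow> last (concat (map (\<lambda>s. f s @ [x]) ts)) = x"
  by (induction ts) auto

lemma last_contour [simp]: "last (contour m t) = int m"
  by (cases t) (auto simp: last_concat_map_snoc)

lemma contour_ge: "x \<in> set (contour m t) \<Longrightarrow> int m \<le> x"
proof (induction m t arbitrary: x rule: contour.induct)
  case (1 m ts)
  then show ?case by (fastforce split: if_splits)
qed

lemma contour_unit_steps: "successively unit_step (contour m t)"
proof (induction m t rule: contour.induct)
  case (1 m ts)
  have "successively unit_step (int m # concat (map (\<lambda>s. contour (Suc m) s @ [int m]) ts))"
    using 1
  proof (induction ts)
    case (Cons s ss)
    have "int m # concat (map (\<lambda>s. contour (Suc m) s @ [int m]) (s # ss)) =
      [int m] @ contour (Suc m) s @ (int m # concat (map (\<lambda>s. contour (Suc m) s @ [int m]) ss))"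
      by simp
    also have "successively unit_step \<dots>"
      using Cons by (simp only: successively_append_iff) auto
    finally show ?case .
  qed simp
  then show ?case by simp
qed

lemma append_Cons_eq_append_Cons_notin:
  "x \<notin> set xs \<Longrightarrow> x \<notin> set ys \<Longrightarrow> xs @ x # zs = ys @ x # ws \<Longrightarrow> xs = ys \<and> zs = ws"
proof (induction xs arbitrary: ys)
  case Nil
  then show ?case by (cases ys) auto
next
  case (Cons a as)
  then show ?case by (cases ys) auto
qed

lemma contour_inj: "contour m t = contour m t' \<Longrightarrow> t = t'"
proof (induction t arbitrary: t' m)
  case (Node ts)
  obtain ts' where t': "t' = Node ts'" by (cases t')
  have "concat (map (\<lambda>s. contour (Suc m) s @ [int m]) ts) =
        concat (map (\<lambda>s. contour (Suc m) s @ [int m]) ts')"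
    using Node.prems t' by simp
  then have "ts = ts'" using Node.IH
  proof (induction ts arbitrary: ts')
    case Nil
    then show ?case by (cases ts') auto
  next
    case (Cons s ss)
    then obtain s' ss' where ts': "ts' = s' # ss'" by (cases ts') auto
    have notin: "int m \<notin> set (contour (Suc m) s)" "int m \<notin> set (contour (Suc m) s')"
      using contour_ge by fastforce+
    have "contour (Suc m) s = contour (Suc m) s'"
      and "concat (map (\<lambda>s. contour (Suc m) s @ [int m]) ss) =
           concat (map (\<lambda>s. contour (Suc m) s @ [int m]) ss')"
      using append_Cons_eq_append_Cons_notin[OF notin] Cons.prems(1) ts' by simp_all
    then show ?case using Cons ts' by auto
  qed
  then show ?case using t' by simp
qed

text \<open>Split the excursion at its first return to level \<open>m\<close>.\<close>
lemma excursion_is_contour: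
  assumes "xs \<noteq> []" "hd xs = int m" "last xs = int m" "\<forall>x\<in>set xs. int m \<le> x"
    and "successively unit_step xs"
  shows "\<exists>t. xs = contour m t"
  using assms
proof (induction "length xs" arbitrary: xs m rule: less_induct)
  case less
  then obtain ys where xs: "xs = int m # ys" by (cases xs) auto
  show ?case
  proof (cases ys)
    case Nil
    then show ?thesis using xs by (intro exI[of _ "Node []"]) simp
  next
    case (Cons y zs)
    have "int m \<le> y" "\<bar>y - int m\<bar> = 1" using less.prems(4,5) xs Cons by auto
    then have y: "y = int m + 1" by linarith
    have "int m \<in> set ys" using less.prems(3) xs Cons by (metis last_ConsR last_in_set list.simps(3))
    then obtain as bs where ys: "ys = as @ int m # bs" and nas: "int m \<notin> set as"
      using split_list_first by metis
    have asne: "as \<noteq> []" using ys Cons y by (cases as) auto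
    have xs': "xs = int m # as @ int m # bs" using xs ys by simp
    have steps: "successively unit_step as" "successively unit_step (int m # bs)"
      "unit_step (last as) (int m)"
      using less.prems(5) asne unfolding xs' by (auto simp: successively_append_iff successively_Cons)
    have as_above: "\<forall>x\<in>set as. int (Suc m) \<le> x"
    proof
      fix x assume "x \<in> set as"
      then have "int m \<le> x" "x \<noteq> int m" using less.prems(4) nas unfolding xs' by auto
      then show "int (Suc m) \<le> x" by linarith
    qed
    have "hd as = int (Suc m)" using ys Cons y asne by (cases as) auto
    moreover have "last as = int (Suc m)"
      using steps(3) as_above last_in_set[OF asne] by fastforce
    ultimately obtain s where s: "as = contour (Suc m) s"
      using less.hyps[of as "Suc m"] asne as_above steps(1) unfolding xs' by force
    have "last (int m # bs) = int m" using less.prems(3) unfolding xs' by (cases bs) auto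
    then obtain t where t: "int m # bs = contour m t"
      using less.hyps[of "int m # bs" m] steps(2) less.prems(4) asne unfolding xs' by force
    obtain ts where "t = Node ts" by (cases t)
    then have "xs = contour m (Node (s # ts))" using xs' s t by simp
    then show ?thesis by blast
  qed
qed

fun height_below :: "tree \<Rightarrow> nat \<Rightarrow> bool" where
  "height_below (Node ts) h \<longleftrightarrow> 0 < h \<and> (\<forall>s\<in>set ts. height_below s (h - 1))"

lemma height_below_0: "\<not> height_below t 0"
  by (cases t) simp

lemma contour_le_iff_height_below:
  "m \<le> Suc M \<Longrightarrow> set (contour m t) \<subseteq> {..int M} \<longleftrightarrow> height_below t (Suc M - m)"
proof (induction m t arbitrary: M rule: contour.induct)
  case (1 m ts)
  show ?case
  proof (cases "m = Suc M")
    case False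
    then have "m \<le> M" using 1(2) by simp
    then have "set (contour m (Node ts)) \<subseteq> {..int M} \<longleftrightarrow>
        (\<forall>s\<in>set ts. set (contour (Suc m) s) \<subseteq> {..int M})"
      by auto
    also have "\<dots> \<longleftrightarrow> (\<forall>s\<in>set ts. height_below s (Suc M - Suc m))"
      using 1(1) \<open>m \<le> M\<close> by simp
    finally show ?thesis using \<open>m \<le> M\<close> by (simp add: Suc_diff_le)
  qed simp
qed

lemma scat_seqs_iff:
  "p \<in> scat_seqs M \<longleftrightarrow>
     (\<exists>xs. p = -1 # xs @ [-1] \<and> xs \<noteq> [] \<and> set xs \<subseteq> {0..int M} \<and> successively unit_step p)"
proof
  assume p: "p \<in> scat_seqs M"
  then have len: "length p \<ge> 3" and p0: "p ! 0 = -1" and pl: "p ! (length p - 1) = -1"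
    and mid: "\<forall>j. 1 \<le> j \<and> j \<le> length p - 2 \<longrightarrow> 0 \<le> p ! j \<and> p ! j \<le> int M"
    and st: "\<forall>j < length p - 1. \<bar>p ! (Suc j) - p ! j\<bar> = 1"
    unfolding scat_seqs_def by auto
  define xs where "xs = take (length p - 2) (drop 1 p)"
  have pe: "p = -1 # xs @ [-1]"
  proof (rule nth_equalityI)
    show "length p = length (-1 # xs @ [-1])" using len by (simp add: xs_def)
    fix i assume i: "i < length p"
    consider "i = 0" | "i = length p - 1" | i' where "i = Suc i'" "i' < length p - 2"
      using i by (cases i) fastforce+
    then show "p ! i = (-1 # xs @ [-1]) ! i"
      by cases (use p0 pl len in \<open>simp_all add: xs_def nth_append numeral_2_eq_2\<close>)
  qed
  have "set xs \<subseteq> {0..int M}"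
  proof
    fix x assume "x \<in> set xs"
    then obtain i where i: "i < length xs" "x = xs ! i" by (auto simp: in_set_conv_nth)
    then have "p ! Suc i = x" "1 \<le> Suc i \<and> Suc i \<le> length p - 2"
      using pe by (simp_all add: nth_append)
    then show "x \<in> {0..int M}" using mid by auto
  qed
  moreover have "xs \<noteq> []" using len by (simp add: xs_def)
  moreover have "successively unit_step p" using st by (auto simp: successively_conv_nth)
  ultimately show "\<exists>xs. p = -1 # xs @ [-1] \<and> xs \<noteq> [] \<and> set xs \<subseteq> {0..int M} \<and> successively unit_step p"
    using pe by blast
next
  assume "\<exists>xs. p = -1 # xs @ [-1] \<and> xs \<noteq> [] \<and> set xs \<subseteq> {0..int M} \<and> successively unit_step p"
  then obtain xs where pe: "p = -1 # xs @ [-1]" and xne: "xs \<noteq> []"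
    and vals: "set xs \<subseteq> {0..int M}" and st: "successively unit_step p"
    by blast
  have "\<forall>j. 1 \<le> j \<and> j \<le> length p - 2 \<longrightarrow> 0 \<le> p ! j \<and> p ! j \<le> int M"
  proof (intro allI impI)
    fix j assume "1 \<le> j \<and> j \<le> length p - 2"
    then have "p ! j = xs ! (j - 1)" "j - 1 < length xs"
      unfolding pe by (auto simp: nth_append nth_Cons split: nat.splits)
    then show "0 \<le> p ! j \<and> p ! j \<le> int M" using vals nth_mem by force
  qed
  moreover have "length p \<ge> 3" using xne unfolding pe by (cases xs) auto
  ultimately show "p \<in> scat_seqs M"
    using st unfolding scat_seqs_def by (auto simp: pe nth_append successively_conv_nth)
qed

definition scat_path :: "tree \<Rightarrow> int list" where
  "scat_path t = -1 # contour 0 t @ [-1]"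

lemma inj_scat_path: "inj scat_path"
  by (rule injI) (auto simp: scat_path_def intro: contour_inj)

lemma scat_seqs_eq_image_scat_path: "scat_seqs M = scat_path ` {t. height_below t (Suc M)}"
proof (intro equalityI subsetI)
  fix p assume "p \<in> scat_seqs M"
  then obtain xs where p: "p = -1 # xs @ [-1]" and xne: "xs \<noteq> []"
    and vals: "set xs \<subseteq> {0..int M}" and st: "successively unit_step p"
    by (auto simp: scat_seqs_iff)
  have "successively unit_step xs" "unit_step (-1) (hd xs)" "unit_step (last xs) (-1)"
    using st xne unfolding p by (auto simp: successively_append_iff successively_Cons)
  moreover have "hd xs \<ge> 0" "last xs \<ge> 0"
    using vals hd_in_set[OF xne] last_in_set[OF xne] by auto
  ultimately obtain t where t: "xs = contour 0 t"
    using excursion_is_contour[of xs 0] xne vals by force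
  then have "height_below t (Suc M)" using contour_le_iff_height_below[of 0 M t] vals by auto
  then show "p \<in> scat_path ` {t. height_below t (Suc M)}" using p t by (auto simp: scat_path_def)
next
  fix p assume "p \<in> scat_path ` {t. height_below t (Suc M)}"
  then obtain t where p: "p = scat_path t" and h: "height_below t (Suc M)" by blast
  have "set (contour 0 t) \<subseteq> {0..int M}"
    using contour_le_iff_height_below[of 0 M t] h contour_ge[of _ 0 t] by auto
  moreover have "successively unit_step p"
    using contour_unit_steps[of 0 t]
    by (auto simp: p scat_path_def successively_append_iff successively_Cons)
  ultimately show "p \<in> scat_seqs M" by (auto simp: scat_seqs_iff p scat_path_def)
qed

section \<open>Transit counts are level sizes\<close>

fun up_crossings :: "int \<Rightarrow> int \<Rightarrow> int list \<Rightarrow> nat" where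
  "up_crossings n prev [] = 0"
| "up_crossings n prev (x # xs) = (if n \<le> x \<and> prev < n then 1 else 0) + up_crossings n x xs"

lemma card_up_crossings:
  "card {j. j < length xs \<and> n \<le> xs ! j \<and> (if j = 0 then prev < n else xs ! (j - 1) < n)} =
   up_crossings n prev xs"
proof (induction xs arbitrary: prev)
  case (Cons x xs)
  let ?S = "{j. j < length xs \<and> n \<le> xs ! j \<and> (if j = 0 then x < n else xs ! (j - 1) < n)}"
  have "{j. j < length (x # xs) \<and> n \<le> (x # xs) ! j \<and>
            (if j = 0 then prev < n else (x # xs) ! (j - 1) < n)} =
        (if n \<le> x \<and> prev < n then {0} else {}) \<union> Suc ` ?S"
  proof (rule set_eqI)
    fix j show "j \<in> {j. j < length (x # xs) \<and> n \<le> (x # xs) ! j \<and>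
            (if j = 0 then prev < n else (x # xs) ! (j - 1) < n)} \<longleftrightarrow>
        j \<in> (if n \<le> x \<and> prev < n then {0} else {}) \<union> Suc ` ?S"
      by (cases j) (auto simp: nth_Cons split: nat.splits)
  qed
  moreover have "card ((if n \<le> x \<and> prev < n then {0} else {}) \<union> Suc ` ?S) =
      (if n \<le> x \<and> prev < n then 1 else 0) + card ?S"
    by (subst card_Un_disjoint) (auto simp: card_image)
  ultimately show ?case using Cons.IH[of x] by simp
qed simp

lemma kappa_eq_up_crossings: "kappa p n = up_crossings (int n) (int n - 1) p"
proof -
  have "{j. j < length p \<and> p ! j \<ge> int n \<and> (j = 0 \<or> p ! (j - 1) < int n)} =
        {j. j < length p \<and> int n \<le> p ! j \<and> (if j = 0 then int n - 1 < int n else p ! (j - 1) < int n)}"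
    by auto
  then show ?thesis unfolding kappa_def using card_up_crossings by simp
qed

lemma up_crossings_append:
  "up_crossings n prev (xs @ ys) = up_crossings n prev xs + up_crossings n (last (prev # xs)) ys"
  by (induction xs arbitrary: prev) auto

lemma up_crossings_eq_0: "n \<le> prev \<Longrightarrow> \<forall>x\<in>set xs. n \<le> x \<Longrightarrow> up_crossings n prev xs = 0"
  by (induction xs arbitrary: prev) auto

fun level_size :: "nat \<Rightarrow> tree \<Rightarrow> nat" where
  "level_size 0 t = 1"
| "level_size (Suc n) (Node ts) = (\<Sum>s\<leftarrow>ts. level_size n s)"

lemma up_crossings_contour:
  "up_crossings (int n) (int m - 1) (contour m t) = (if n < m then 0 else level_size (n - m) t)"
proof (induction m t arbitrary: n rule: contour.induct)
  case (1 m ts)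
  let ?tail = "concat (map (\<lambda>s. contour (Suc m) s @ [int m]) ts)"
  show ?case
  proof (cases "n \<le> m")
    case True
    have "int m \<le> x" if "x \<in> set ?tail" for x
    proof -
      from that have "x = int m \<or> (\<exists>s\<in>set ts. x \<in> set (contour (Suc m) s))"
        by (auto split: if_splits)
      then show ?thesis using contour_ge[of x "Suc m"] by force
    qed
    then have "\<forall>x\<in>set ?tail. int n \<le> x" using True by force
    then show ?thesis using True by (auto simp: up_crossings_eq_0)
  next
    case False
    have "up_crossings (int n) (int m) (concat (map (\<lambda>s. contour (Suc m) s @ [int m]) ss)) =
          (\<Sum>s\<leftarrow>ss. level_size (n - Suc m) s)" if "set ss \<subseteq> set ts" for ss
      using that
    proof (induction ss)
      case (Cons s ss)
      then show ?case
        using "1.IH"[of s n] False by (auto simp: up_crossings_append)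
    qed simp
    moreover have "n - m = Suc (n - Suc m)" using False by simp
    ultimately show ?thesis using False by simp
  qed
qed

lemma kappa_scat_path: "kappa (scat_path t) = (\<lambda>n. level_size n t)"
proof
  fix n
  have "kappa (scat_path t) n = up_crossings (int n) (-1) (contour 0 t @ [-1])"
    by (simp add: kappa_eq_up_crossings scat_path_def)
  also have "\<dots> = level_size n t" using up_crossings_contour[of n 0 t] by (simp add: up_crossings_append)
  finally show "kappa (scat_path t) n = level_size n t" .
qed

section \<open>The weight factors over the nodes\<close>

definition turn_weight :: "(nat \<Rightarrow> real) \<Rightarrow> int \<Rightarrow> int \<Rightarrow> int \<Rightarrow> real" where
  "turn_weight R a m c =
     (if a = m - 1 \<and> c = m - 1 then R (nat m)
      else if a = m + 1 \<and> c = m + 1 then - R (nat m) else sqrt (1 - (R (nat m))\<^sup>2))"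

fun interior_weight :: "(nat \<Rightarrow> real) \<Rightarrow> int \<Rightarrow> int list \<Rightarrow> int \<Rightarrow> real" where
  "interior_weight R a [] c = 1"
| "interior_weight R a (x # xs) c = turn_weight R a x (hd (xs @ [c])) * interior_weight R x xs c"

lemma interior_weight_append:
  "interior_weight R a (xs @ ys) c =
   interior_weight R a xs (hd (ys @ [c])) * interior_weight R (last (a # xs)) ys c"
proof (induction xs arbitrary: a)
  case (Cons x xs)
  have "hd (xs @ ys @ [c]) = hd (xs @ [hd (ys @ [c])])" by (cases xs) auto
  then show ?case using Cons by simp
qed simp

lemma weight_eq_interior_weight: "weight R (a # xs @ [c]) = interior_weight R a xs c"
proof (induction xs arbitrary: a)
  case Nil
  then show ?case by (simp add: weight_def)
next
  case (Cons x xs)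
  let ?w = "step_weight R"
  have turn: "\<And>p j. ?w p j = turn_weight R (p ! (j - 1)) (p ! j) (p ! Suc j)"
    by (simp add: step_weight_def turn_weight_def Let_def)
  have "weight R (a # (x # xs) @ [c]) = (\<Prod>j\<in>{1..<length xs + 2}. ?w (a # x # xs @ [c]) j)"
    by (simp add: weight_def)
  also have "\<dots> = ?w (a # x # xs @ [c]) 1 *
      (\<Prod>j\<in>{Suc 1..<Suc (length xs + 1)}. ?w (a # x # xs @ [c]) j)"
    by (subst prod.atLeast_Suc_lessThan) auto
  also have "(\<Prod>j\<in>{Suc 1..<Suc (length xs + 1)}. ?w (a # x # xs @ [c]) j) =
       (\<Prod>j\<in>{1..<length xs + 1}. ?w (x # xs @ [c]) j)"
    unfolding prod.shift_bounds_Suc_ivl by (rule prod.cong) (auto simp: turn)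
  also have "\<dots> = interior_weight R x xs c"
    using Cons.IH by (simp add: weight_def)
  finally show ?case
    by (simp add: turn nth_append) (cases xs; simp)
qed

definition geom_weight :: "real \<Rightarrow> real \<Rightarrow> real \<Rightarrow> nat \<Rightarrow> real" where
  "geom_weight P V Q r = (if r = 0 then P else Q * V ^ (r - 1))"

definition node_weight :: "(nat \<Rightarrow> real) \<Rightarrow> nat \<Rightarrow> nat \<Rightarrow> real" where
  "node_weight R d = geom_weight (R d) (- R d) ((sqrt (1 - (R d)\<^sup>2))\<^sup>2)"

fun tree_weight :: "(nat \<Rightarrow> real) \<Rightarrow> nat \<Rightarrow> tree \<Rightarrow> real" where
  "tree_weight R d (Node ts) = node_weight R d (length ts) * (\<Prod>s\<leftarrow>ts. tree_weight R (Suc d) s)"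

lemma interior_weight_children:
  assumes "ts \<noteq> []"
    and "\<forall>s\<in>set ts. interior_weight R (int d) (contour (Suc d) s) (int d) = tree_weight R (Suc d) s"
  shows "interior_weight R (int d) (concat (map (\<lambda>s. contour (Suc d) s @ [int d]) ts)) (int d - 1) =
     (\<Prod>s\<leftarrow>ts. tree_weight R (Suc d) s) * (- R d) ^ (length ts - 1) * sqrt (1 - (R d)\<^sup>2)"
  using assms
proof (induction ts)
  case (Cons s ss)
  let ?rest = "concat (map (\<lambda>s. contour (Suc d) s @ [int d]) ss)"
  have s: "interior_weight R (int d) (contour (Suc d) s) (int d) = tree_weight R (Suc d) s"
    using Cons.prems by simp
  have split: "concat (map (\<lambda>s. contour (Suc d) s @ [int d]) (s # ss)) = contour (Suc d) s @ int d # ?rest"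
    by simp
  show ?case
  proof (cases ss)
    case Nil
    then show ?thesis unfolding split interior_weight_append using s by (simp add: turn_weight_def)
  next
    case (Cons s' ss')
    then have "hd (?rest @ [int d - 1]) = int d + 1" by simp
    then show ?thesis
      unfolding split interior_weight_append using s Cons.IH Cons.prems Cons
      by (simp add: turn_weight_def)
  qed
qed simp

lemma interior_weight_contour:
  "interior_weight R (int d - 1) (contour d t) (int d - 1) = tree_weight R d t"
proof (induction d t rule: contour.induct)
  case (1 d ts)
  show ?case
  proof (cases ts)
    case Nil
    then show ?thesis by (simp add: turn_weight_def node_weight_def geom_weight_def)
  next
    case (Cons s ss)
    let ?tail = "concat (map (\<lambda>s. contour (Suc d) s @ [int d]) ts)"
    have "hd (?tail @ [int d - 1]) = int d + 1" using Cons by simp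
    then have "interior_weight R (int d - 1) (contour d (Node ts)) (int d - 1) =
        sqrt (1 - (R d)\<^sup>2) * interior_weight R (int d) ?tail (int d - 1)"
      by (simp add: turn_weight_def)
    also have "\<dots> = tree_weight R d (Node ts)"
      using interior_weight_children[of ts R d] 1 Cons
      by (simp add: node_weight_def geom_weight_def power2_eq_square)
    finally show ?thesis .
  qed
qed

lemma weight_scat_path: "weight R (scat_path t) = tree_weight R 0 t"
  using interior_weight_contour[of R 0 t] by (simp add: scat_path_def weight_eq_interior_weight)

section \<open>Summing over forests level by level\<close>

definition weak_compositions :: "nat \<Rightarrow> nat \<Rightarrow> nat list set" where
  "weak_compositions a c = {cs. length cs = a \<and> sum_list cs = c}"

lemma finite_weak_compositions: "finite (weak_compositions a c)"
proof (rule finite_subset)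
  show "weak_compositions a c \<subseteq> {xs. set xs \<subseteq> {..c} \<and> length xs = a}"
    by (auto simp: weak_compositions_def member_le_sum_list)
qed (simp add: finite_lists_length_eq)

lemma weak_compositions_0: "weak_compositions 0 c = (if c = 0 then {[]} else {})"
  by (auto simp: weak_compositions_def)

lemma weak_compositions_Suc:
  "weak_compositions (Suc a) c = (\<lambda>(s, cs). s # cs) ` (SIGMA s:{..c}. weak_compositions a (c - s))"
proof (rule set_eqI)
  fix xs
  show "xs \<in> weak_compositions (Suc a) c \<longleftrightarrow>
        xs \<in> (\<lambda>(s, cs). s # cs) ` (SIGMA s:{..c}. weak_compositions a (c - s))"
    by (cases xs) (auto simp: weak_compositions_def image_iff)
qed

fun conv_power :: "(nat \<Rightarrow> real) \<Rightarrow> nat \<Rightarrow> nat \<Rightarrow> real" where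
  "conv_power f 0 c = (if c = 0 then 1 else 0)"
| "conv_power f (Suc a) c = (\<Sum>s\<le>c. f s * conv_power f a (c - s))"

lemma sum_weak_compositions_prod: "(\<Sum>cs\<in>weak_compositions a c. \<Prod>s\<leftarrow>cs. f s) = conv_power f a c"
proof (induction a arbitrary: c)
  case 0
  then show ?case by (simp add: weak_compositions_0)
next
  case (Suc a)
  have inj: "inj_on (\<lambda>(s, cs). s # cs) (SIGMA s:{..c}. weak_compositions a (c - s))"
    by (auto simp: inj_on_def)
  have "(\<Sum>cs\<in>weak_compositions (Suc a) c. \<Prod>s\<leftarrow>cs. f s) =
      (\<Sum>(s, cs)\<in>(SIGMA s:{..c}. weak_compositions a (c - s)). f s * (\<Prod>s\<leftarrow>cs. f s))"
    unfolding weak_compositions_Suc sum.reindex[OF inj] by (rule sum.cong) auto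
  also have "\<dots> = (\<Sum>s\<le>c. \<Sum>cs\<in>weak_compositions a (c - s). f s * (\<Prod>s\<leftarrow>cs. f s))"
    by (rule sum.Sigma[symmetric]) (auto simp: finite_weak_compositions)
  also have "\<dots> = conv_power f (Suc a) c"
    by (simp add: sum_distrib_left[symmetric] Suc.IH)
  finally show ?case .
qed

definition forest_level_size :: "nat \<Rightarrow> tree list \<Rightarrow> nat" where
  "forest_level_size n ts = (\<Sum>t\<leftarrow>ts. level_size n t)"

definition forests :: "nat \<Rightarrow> (nat \<Rightarrow> nat) \<Rightarrow> tree list set" where
  "forests h k = {ts. (\<forall>t\<in>set ts. height_below t h) \<and> (\<forall>n. forest_level_size n ts = k n)}"

definition strip_roots :: "tree list \<Rightarrow> nat list \<times> tree list" where
  "strip_roots ts = (map (\<lambda>t. length (children t)) ts, concat (map children ts))"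

fun regraft :: "nat list \<Rightarrow> tree list \<Rightarrow> tree list" where
  "regraft [] ts = []"
| "regraft (c # cs) ts = Node (take c ts) # regraft cs (drop c ts)"

lemma regraft_strip_roots: "regraft (fst (strip_roots ts)) (snd (strip_roots ts)) = ts"
proof (induction ts)
  case (Cons t ts)
  then show ?case by (cases t) (simp add: strip_roots_def)
qed (simp add: strip_roots_def)

lemma inj_strip_roots: "inj strip_roots"
  by (metis injI regraft_strip_roots)

lemma strip_roots_regraft: "sum_list cs = length ts \<Longrightarrow> strip_roots (regraft cs ts) = (cs, ts)"
proof (induction cs arbitrary: ts)
  case (Cons c cs)
  then show ?case by (simp add: strip_roots_def min_def)
qed (simp add: strip_roots_def)

lemma sum_fst_strip_roots: "sum_list (fst (strip_roots ts)) = length (snd (strip_roots ts))"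
  by (induction ts) (auto simp: strip_roots_def)

lemma length_fst_strip_roots: "length (fst (strip_roots ts)) = length ts"
  by (simp add: strip_roots_def)

lemma forest_level_size_0: "forest_level_size 0 ts = length ts"
  by (induction ts) (auto simp: forest_level_size_def)

lemma forest_level_size_Suc: "forest_level_size (Suc n) ts = forest_level_size n (snd (strip_roots ts))"
proof (induction ts)
  case (Cons t ts)
  then show ?case by (cases t) (simp add: forest_level_size_def strip_roots_def)
qed (simp add: forest_level_size_def strip_roots_def)

lemma height_below_strip_roots:
  "(\<forall>t\<in>set ts. height_below t (Suc h)) \<longleftrightarrow> (\<forall>t\<in>set (snd (strip_roots ts)). height_below t h)"
proof (induction ts)
  case (Cons t ts)
  then show ?case by (cases t) (auto simp: strip_roots_def)
qed (simp add: strip_roots_def)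

lemma prod_tree_weight_strip_roots:
  "(\<Prod>t\<leftarrow>ts. tree_weight R d t) =
   (\<Prod>r\<leftarrow>fst (strip_roots ts). node_weight R d r) * (\<Prod>t\<leftarrow>snd (strip_roots ts). tree_weight R (Suc d) t)"
proof (induction ts)
  case (Cons t ts)
  then show ?case by (cases t) (simp add: strip_roots_def)
qed (simp add: strip_roots_def)

lemma strip_roots_forests:
  "strip_roots ` forests (Suc h) k = weak_compositions (k 0) (k 1) \<times> forests h (\<lambda>n. k (Suc n))"
proof (intro equalityI subsetI)
  fix x assume "x \<in> strip_roots ` forests (Suc h) k"
  then obtain ts where x: "x = strip_roots ts" and "ts \<in> forests (Suc h) k" by blast
  then have h: "\<forall>t\<in>set ts. height_below t (Suc h)" and k: "\<forall>n. forest_level_size n ts = k n"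
    by (auto simp: forests_def)
  have "fst (strip_roots ts) \<in> weak_compositions (k 0) (k 1)"
    using k[rule_format, of 0] k[rule_format, of 1] forest_level_size_Suc[of 0 ts]
    by (simp add: weak_compositions_def length_fst_strip_roots sum_fst_strip_roots forest_level_size_0)
  moreover have "snd (strip_roots ts) \<in> forests h (\<lambda>n. k (Suc n))"
    using h k height_below_strip_roots[of ts h] forest_level_size_Suc[of _ ts] by (auto simp: forests_def)
  ultimately show "x \<in> weak_compositions (k 0) (k 1) \<times> forests h (\<lambda>n. k (Suc n))"
    using x by (simp add: mem_Times_iff)
next
  fix x assume "x \<in> weak_compositions (k 0) (k 1) \<times> forests h (\<lambda>n. k (Suc n))"
  then obtain cs ts where x: "x = (cs, ts)" and cs: "cs \<in> weak_compositions (k 0) (k 1)"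
    and ts: "ts \<in> forests h (\<lambda>n. k (Suc n))"
    by blast
  have "sum_list cs = length ts"
    using cs ts forest_level_size_0[of ts] by (auto simp: weak_compositions_def forests_def)
  then have strip: "strip_roots (regraft cs ts) = (cs, ts)" by (rule strip_roots_regraft)
  have "forest_level_size n (regraft cs ts) = k n" for n
    using cs ts forest_level_size_0[of "regraft cs ts"] length_fst_strip_roots[of "regraft cs ts"]
      forest_level_size_Suc[of _ "regraft cs ts"]
    by (cases n) (simp_all add: strip weak_compositions_def forests_def)
  moreover have "\<forall>t\<in>set (regraft cs ts). height_below t (Suc h)"
    using height_below_strip_roots[of "regraft cs ts" h] strip ts by (simp add: forests_def)
  ultimately have "regraft cs ts \<in> forests (Suc h) k" by (simp add: forests_def)
  then show "x \<in> strip_roots ` forests (Suc h) k" using strip x by force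
qed

lemma finite_forests: "finite (forests h k)"
proof (induction h arbitrary: k)
  case 0
  have "forests 0 k \<subseteq> {[]}" using height_below_0 by (auto simp: forests_def neq_Nil_conv)
  then show ?case by (rule finite_subset) simp
next
  case (Suc h)
  have "finite (strip_roots ` forests (Suc h) k)"
    unfolding strip_roots_forests using Suc.IH finite_weak_compositions by simp
  then show ?case by (rule finite_imageD) (meson inj_strip_roots inj_on_subset subset_UNIV)
qed

lemma sum_forests_tree_weight:
  assumes "\<forall>n\<ge>h. k n = 0"
  shows "(\<Sum>ts\<in>forests h k. \<Prod>t\<leftarrow>ts. tree_weight R d t) =
         (\<Prod>n<h. conv_power (node_weight R (d + n)) (k n) (k (Suc n)))"
  using assms
proof (induction h arbitrary: d k)
  case 0
  then have "forests 0 k = {[]}"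
    using height_below_0 by (auto simp: forests_def forest_level_size_def neq_Nil_conv)
  then show ?case by simp
next
  case (Suc h)
  let ?k = "\<lambda>n. k (Suc n)"
  have inj: "inj_on strip_roots (forests (Suc h) k)" by (meson inj_strip_roots inj_on_subset subset_UNIV)
  let ?g = "\<lambda>(cs, ts). (\<Prod>r\<leftarrow>cs. node_weight R d r) * (\<Prod>t\<leftarrow>ts. tree_weight R (Suc d) t)"
  have "(\<Sum>ts\<in>forests (Suc h) k. \<Prod>t\<leftarrow>ts. tree_weight R d t) =
        (\<Sum>ts\<in>forests (Suc h) k. ?g (strip_roots ts))"
    by (simp only: case_prod_beta prod_tree_weight_strip_roots[of R d])
  also have "\<dots> = (\<Sum>x\<in>weak_compositions (k 0) (k 1) \<times> forests h ?k. ?g x)"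
    unfolding strip_roots_forests[symmetric] sum.reindex[OF inj] by simp
  also have "\<dots> = (\<Sum>cs\<in>weak_compositions (k 0) (k 1). \<Prod>r\<leftarrow>cs. node_weight R d r) *
                  (\<Sum>ts\<in>forests h ?k. \<Prod>t\<leftarrow>ts. tree_weight R (Suc d) t)"
    by (simp only: sum_product sum.cartesian_product)
  also have "\<dots> = conv_power (node_weight R d) (k 0) (k 1) *
                  (\<Prod>n<h. conv_power (node_weight R (Suc d + n)) (?k n) (?k (Suc n)))"
    using Suc by (simp del: conv_power.simps add: sum_weak_compositions_prod)
  also have "\<dots> = (\<Prod>n<Suc h. conv_power (node_weight R (d + n)) (k n) (k (Suc n)))"
    by (subst prod.lessThan_Suc_shift) (simp del: conv_power.simps)
  finally show ?case .
qed

section \<open>Convolution powers of the node weight\<close>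

fun pos_composition_count :: "nat \<Rightarrow> nat \<Rightarrow> nat" where
  "pos_composition_count 0 b = (if b = 0 then 1 else 0)"
| "pos_composition_count (Suc c) b = (if b = 0 then 0 else c choose (b - 1))"

lemma pos_composition_count_Suc_Suc:
  "pos_composition_count (Suc c) (Suc b) = pos_composition_count c (Suc b) + pos_composition_count c b"
  by (cases c; cases b) auto

lemma pos_composition_count_eq_0: "c < b \<Longrightarrow> pos_composition_count c b = 0"
  by (cases c) auto

lemma sum_pos_composition_count: "(\<Sum>j<c. pos_composition_count j b) = pos_composition_count c (Suc b)"
  by (induction c) (simp_all add: pos_composition_count_Suc_Suc del: pos_composition_count.simps(2))

lemma sum_geometric_pos_composition_count:
  fixes V :: real
  shows "(\<Sum>s<c. V ^ s * (pos_composition_count (c - Suc s) b * V ^ (c - Suc s - b))) =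
         pos_composition_count c (Suc b) * V ^ (c - Suc b)"
proof -
  have exponents: "V ^ s * (pos_composition_count (c - Suc s) b * V ^ (c - Suc s - b)) =
        pos_composition_count (c - Suc s) b * V ^ (c - Suc b)" if "s < c" for s
  proof (cases "b \<le> c - Suc s")
    case True
    then have "s + (c - Suc s - b) = c - Suc b" using that by simp
    then show ?thesis by (simp add: power_add[symmetric])
  qed (simp add: pos_composition_count_eq_0)
  have "(\<Sum>s<c. V ^ s * (pos_composition_count (c - Suc s) b * V ^ (c - Suc s - b))) =
        (\<Sum>s<c. real (pos_composition_count (c - Suc s) b)) * V ^ (c - Suc b)"
    unfolding sum_distrib_right by (rule sum.cong[OF refl exponents]) simp
  also have "(\<Sum>s<c. real (pos_composition_count (c - Suc s) b)) = pos_composition_count c (Suc b)"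
    using sum.nat_diff_reindex[of "\<lambda>j. pos_composition_count j b" c]
    by (simp only: of_nat_sum[symmetric] sum_pos_composition_count)
  finally show ?thesis .
qed

lemma conv_power_geom_weight:
  fixes P V Q :: real
  shows "conv_power (geom_weight P V Q) a c =
   (\<Sum>b\<le>a. (a choose b) * pos_composition_count c b * V ^ (c - b) * P ^ (a - b) * Q ^ b)"
proof (induction a arbitrary: c)
  case 0
  then show ?case by (cases c) simp_all
next
  case (Suc a)
  define pcc where "pcc = pos_composition_count"
  define F where "F a c = (\<Sum>b\<le>a. (a choose b) * pcc c b * V ^ (c - b) * P ^ (a - b) * Q ^ b)" for a c
  have IH: "conv_power (geom_weight P V Q) a c' = F a c'" for c'
    using Suc.IH by (simp add: F_def pcc_def)
  have "conv_power (geom_weight P V Q) (Suc a) c = P * F a c + (\<Sum>s<c. Q * V ^ s * F a (c - Suc s))"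
    by (simp only: conv_power.simps(2) sum.atMost_shift IH) (simp add: geom_weight_def)
  also have "(\<Sum>s<c. Q * V ^ s * F a (c - Suc s)) =
      (\<Sum>b\<le>a. (a choose b) * P ^ (a - b) * Q ^ Suc b *
         (\<Sum>s<c. V ^ s * (pcc (c - Suc s) b * V ^ (c - Suc s - b))))"
    unfolding F_def sum_distrib_left sum_distrib_right
    by (subst sum.swap) (rule sum.cong; simp add: algebra_simps)
  also have "\<dots> = (\<Sum>b\<le>a. (a choose b) * pcc c (Suc b) * V ^ (c - Suc b) * P ^ (a - b) * Q ^ Suc b)"
    unfolding pcc_def sum_geometric_pos_composition_count by (simp add: algebra_simps)
  also have "P * F a c = P ^ Suc a * pcc c 0 * V ^ c +
      (\<Sum>b\<le>a. (a choose Suc b) * pcc c (Suc b) * V ^ (c - Suc b) * P ^ (a - b) * Q ^ Suc b)"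
  proof -
    have "P * F a c = (\<Sum>b\<le>Suc a. (a choose b) * pcc c b * V ^ (c - b) * P ^ (Suc a - b) * Q ^ b)"
      unfolding F_def sum_distrib_left
      by (simp add: Suc_diff_le algebra_simps)
    then show ?thesis by (simp only: sum.atMost_Suc_shift) (simp add: algebra_simps)
  qed
  finally show ?case
    unfolding F_def pcc_def
    by (simp only: sum.atMost_Suc_shift binomial_Suc_Suc) (simp add: sum.distrib algebra_simps)
qed

lemma sum_pos_composition_count_nonzero:
  fixes f :: "nat \<Rightarrow> real"
  shows "(\<Sum>b\<le>a. (a choose b) * pos_composition_count c b * f b) =
   (\<Sum>b\<in>{min 1 c..min a c}. (a choose b) * ((c - min 1 c) choose (b - min 1 c)) * f b)"
proof (rule sum.mono_neutral_cong_right)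
  show "\<forall>b\<in>{..a} - {min 1 c..min a c}. (a choose b) * pos_composition_count c b * f b = 0"
    by (cases c) auto
  show "(a choose b) * pos_composition_count c b * f b =
        (a choose b) * ((c - min 1 c) choose (b - min 1 c)) * f b" if "b \<in> {min 1 c..min a c}" for b
    using that by (cases c; cases b) auto
qed auto

lemma conv_power_node_weight:
  fixes R :: "nat \<Rightarrow> real"
  shows "conv_power (node_weight R d) a c =
   (\<Sum>b\<in>{min 1 c..min a c}. real (a choose b) * real ((c - min 1 c) choose (b - min 1 c)) *
      (- R d) ^ (c - b) * R d ^ (a - b) * sqrt (1 - (R d)\<^sup>2) ^ (2 * b))"
  unfolding node_weight_def conv_power_geom_weight
  using sum_pos_composition_count_nonzero[of a c
      "\<lambda>b. (- R d) ^ (c - b) * R d ^ (a - b) * ((sqrt (1 - (R d)\<^sup>2))\<^sup>2) ^ b"]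
  by (simp add: mult.assoc power_mult)

lemma scat_seqs_kappa_eq_image:
  "{p \<in> scat_seqs M. kappa p = k} =
   scat_path ` {t. height_below t (Suc M) \<and> (\<lambda>n. level_size n t) = k}"
  unfolding scat_seqs_eq_image_scat_path using kappa_scat_path by auto

lemma forests_root:
  assumes "k 0 = 1"
  shows "forests h k = (\<lambda>t. [t]) ` {t. height_below t h \<and> (\<lambda>n. level_size n t) = k}"
proof (intro equalityI subsetI)
  fix ts assume ts: "ts \<in> forests h k"
  then have "length ts = 1" using forest_level_size_0[of ts] assms by (auto simp: forests_def)
  then obtain t where "ts = [t]" by (auto simp: length_Suc_conv)
  then show "ts \<in> (\<lambda>t. [t]) ` {t. height_below t h \<and> (\<lambda>n. level_size n t) = k}"
    using ts by (auto simp: forests_def forest_level_size_def)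
qed (auto simp: forests_def forest_level_size_def)

lemma sum_scat_seqs_weight:
  assumes "k 0 = 1" and "\<forall>n>M. k n = 0"
  shows "finite {p \<in> scat_seqs M. kappa p = k}"
    and "(\<Sum>p\<in>{p \<in> scat_seqs M. kappa p = k}. weight R p) =
         (\<Prod>n\<le>M. conv_power (node_weight R n) (k n) (k (Suc n)))"
proof -
  define trees where "trees = {t. height_below t (Suc M) \<and> (\<lambda>n. level_size n t) = k}"
  have inj_singleton: "inj_on (\<lambda>t. [t]) trees" by (auto simp: inj_on_def)
  have inj_path: "inj_on scat_path trees" by (meson inj_scat_path inj_on_subset subset_UNIV)
  have forests_eq: "forests (Suc M) k = (\<lambda>t. [t]) ` trees"
    unfolding trees_def using assms(1) by (simp add: forests_root)
  have "finite trees"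
    using finite_forests[of "Suc M" k] finite_image_iff[OF inj_singleton] by (simp add: forests_eq)
  then show "finite {p \<in> scat_seqs M. kappa p = k}"
    by (simp add: scat_seqs_kappa_eq_image trees_def)
  have "(\<Sum>p\<in>{p \<in> scat_seqs M. kappa p = k}. weight R p) = (\<Sum>t\<in>trees. tree_weight R 0 t)"
    unfolding scat_seqs_kappa_eq_image trees_def[symmetric] sum.reindex[OF inj_path]
    by (simp add: weight_scat_path)
  also have "\<dots> = (\<Sum>ts\<in>forests (Suc M) k. \<Prod>t\<leftarrow>ts. tree_weight R 0 t)"
    unfolding forests_eq sum.reindex[OF inj_singleton] by simp
  also have "\<dots> = (\<Prod>n\<le>M. conv_power (node_weight R n) (k n) (k (Suc n)))"
    using assms(2) by (subst sum_forests_tree_weight) (auto simp: lessThan_Suc_atMost)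
  finally show "(\<Sum>p\<in>{p \<in> scat_seqs M. kappa p = k}. weight R p) =
      (\<Prod>n\<le>M. conv_power (node_weight R n) (k n) (k (Suc n)))" .
qed

lemma prod_sum_eq_sum_Vset:
  fixes g :: "nat \<Rightarrow> nat \<Rightarrow> 'a :: comm_semiring_1"
  shows "(\<Prod>n\<le>M. \<Sum>b\<in>{uvec M k n..min (k n) (ktil M k n)}. g n b) = (\<Sum>b\<in>Vset M k. \<Prod>n\<le>M. g n (b n))"
proof -
  let ?I = "\<lambda>n. {uvec M k n..min (k n) (ktil M k n)}"
  have "(\<Prod>n\<le>M. \<Sum>b\<in>?I n. g n b) = (\<Sum>b\<in>PiE {..M} ?I. \<Prod>n\<le>M. g n (b n))"
    by (rule prod_sum_PiE) auto
  also have "\<dots> = (\<Sum>b\<in>Vset M k. \<Prod>n\<le>M. g n (b n))"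
    by (rule sum.reindex_bij_witness[of _ "\<lambda>b. restrict b {..M}" "\<lambda>b n. if n \<le> M then b n else 0"])
      (auto simp: Vset_def PiE_def extensional_def fun_eq_iff intro!: prod.cong)
  finally show ?thesis .
qed

theorem theorem6p3:
  fixes M :: nat and R :: "nat \<Rightarrow> real" and k :: "nat \<Rightarrow> nat"
  assumes "M \<ge> 1"
    and "\<forall>n \<le> M. -1 < R n \<and> R n < 1"
    and "k \<in> Lset M"
  defines "T \<equiv> (\<lambda>n. sqrt (1 - (R n)\<^sup>2))"
    and "u \<equiv> uvec M k"
  shows "finite {p \<in> scat_seqs M. kappa p = k}
    \<and> (\<Sum>p\<in>{p \<in> scat_seqs M. kappa p = k}. weight R p) =
      (\<Sum>b\<in>Vset M k.
         (\<Prod>n\<le>M. real (k n choose b n)) *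
         (\<Prod>n\<le>M. real ((ktil M k n - u n) choose (b n - u n))) *
         (\<Prod>n\<le>M. (- R n) ^ (ktil M k n - b n)) *
         (\<Prod>n\<le>M. R n ^ (k n - b n)) *
         (\<Prod>n\<le>M. T n ^ (2 * b n)))
    \<and> (\<Sum>p\<in>{p \<in> scat_seqs M. kappa p = k}. weight R p) = amp_poly M R k"
proof -
  have k: "k 0 = 1" "\<forall>n>M. k n = 0" using assms(3) by (auto simp: Lset_def)
  have ktil: "ktil M k n = k (Suc n)" if "n \<le> M" for n
    using that k(2) by (auto simp: ktil_def)
  have T2: "T n ^ 2 = 1 - (R n)\<^sup>2" if "n \<le> M" for n
  proof -
    have "\<bar>R n\<bar> \<le> 1" using assms(2) that by fastforce
    then show ?thesis by (simp add: T_def abs_square_le_1)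
  qed
  have "(\<Sum>p\<in>{p \<in> scat_seqs M. kappa p = k}. weight R p) =
      (\<Prod>n\<le>M. \<Sum>b\<in>{u n..min (k n) (ktil M k n)}. real (k n choose b) * real ((ktil M k n - u n) choose (b - u n)) *
          (- R n) ^ (ktil M k n - b) * R n ^ (k n - b) * T n ^ (2 * b))"
    unfolding sum_scat_seqs_weight(2)[OF k]
    by (rule prod.cong) (simp_all add: conv_power_node_weight ktil u_def uvec_def T_def)
  also have "\<dots> = (\<Sum>b\<in>Vset M k. \<Prod>n\<le>M. real (k n choose b n) * real ((ktil M k n - u n) choose (b n - u n)) *
          (- R n) ^ (ktil M k n - b n) * R n ^ (k n - b n) * T n ^ (2 * b n))"
    unfolding u_def by (rule prod_sum_eq_sum_Vset)
  finally have "(\<Sum>p\<in>{p \<in> scat_seqs M. kappa p = k}. weight R p) = \<dots>" .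
  moreover have "(\<Prod>n\<le>M. T n ^ (2 * b n)) = (\<Prod>n\<le>M. (1 - (R n)\<^sup>2) ^ b n)" for b
    by (rule prod.cong) (simp_all add: power_mult T2)
  ultimately show ?thesis
    using sum_scat_seqs_weight(1)[OF k] by (simp add: amp_poly_def prod.distrib u_def)
qed

end
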